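(* For every $n\ge21$ and every integer $t$ with $\frac{n^2}{8}+\frac{n}{4}-\frac{11}{8}\le t\le \frac{n^2}{8}+\frac{n}{2}-2$, there exists an $(n,t)$-blocker.
   Context: For a convex $n$-gon: an edge is a segment between two vertices; diagonals are edges that are not sides of the polygon. Two edges cross if they share an interior point. A triangulation is a maximal set of pairwise non-crossing diagonals. A blocker is a set $B$ of diagonals having a diagonal in common with every triangulation; it is saturated if for every $e\in B$, $B\setminus\{e\}$ is not a blocker. An $(n,t)$-blocker is a saturated blocker of size $t$ for a convex $n$-gon. *)

theory Defs
  imports Complex_Main
begin

text \<open>Convex n-gon with vertices 0,...,n-1 in cyclic order. An edge is a 2-element
set of vertices. Sides are pairs of cyclically consecutive vertices.\<close>

definition edge :: "nat \<Rightarrow> nat set \<Rightarrow> bool" where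
  "edge n e \<longleftrightarrow> (\<exists>i j. i < n \<and> j < n \<and> i \<noteq> j \<and> e = {i, j})"

definition side :: "nat \<Rightarrow> nat set \<Rightarrow> bool" where
  "side n e \<longleftrightarrow> (\<exists>i<n. e = {i, (i + 1) mod n}) \<and> edge n e"

definition diagonal :: "nat \<Rightarrow> nat set \<Rightarrow> bool" where
  "diagonal n e \<longleftrightarrow> edge n e \<and> \<not> side n e"

text \<open>For points in convex position, two segments share an interior point iff
their endpoints strictly interleave in the cyclic order.\<close>
definition cross :: "nat set \<Rightarrow> nat set \<Rightarrow> bool" where
  "cross e f \<longleftrightarrow> (\<exists>a b c d. e = {a, b} \<and> f = {c, d} \<and> a < c \<and> c < b \<and> b < d)"

definition noncrossing :: "nat set set \<Rightarrow> bool" where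
  "noncrossing S \<longleftrightarrow> (\<forall>e\<in>S. \<forall>f\<in>S. \<not> cross e f)"

definition triangulation :: "nat \<Rightarrow> nat set set \<Rightarrow> bool" where
  "triangulation n T \<longleftrightarrow> (\<forall>e\<in>T. diagonal n e) \<and> noncrossing T \<and>
     (\<forall>e. diagonal n e \<and> e \<notin> T \<longrightarrow> \<not> noncrossing (insert e T))"

definition blocker :: "nat \<Rightarrow> nat set set \<Rightarrow> bool" where
  "blocker n B \<longleftrightarrow> (\<forall>e\<in>B. diagonal n e) \<and> (\<forall>T. triangulation n T \<longrightarrow> B \<inter> T \<noteq> {})"

definition saturated_blocker :: "nat \<Rightarrow> nat set set \<Rightarrow> bool" where
  "saturated_blocker n B \<longleftrightarrow> blocker n B \<and> (\<forall>e\<in>B. \<not> blocker n (B - {e}))"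

definition nt_blocker :: "nat \<Rightarrow> nat \<Rightarrow> nat set set \<Rightarrow> bool" where
  "nt_blocker n t B \<longleftrightarrow> saturated_blocker n B \<and> finite B \<and> card B = t"

end

(*
  Choose vertices 1 <= u, u + 2 <= c, c + 4 <= r < n of the polygon 0, ..., n-1 and let B consist of
  {0, c+1}; all diagonals from {1..u} to {r..n-1}; {u, c} together with all diagonals from
  [0, u) to (u, c); and {c+2, r} together with all diagonals from (c+2, r) to (r, n) or to 0.

  B meets every triangulation T: if {0, c+1} is not in T, the diagonal of T crossing {0, c+1}
  with the widest span is the side pq of a triangle 0pq of T with p < c+1 < q. Each position
  of p and q relative to u, c, c+2, r puts pq, 0p or 0q into B, except when p = c or q = c+2; then
  {0, c} resp. {0, c+2} lies in T, and then {u, c} resp. {c+2, r} or a diagonal of T crossing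
  it belongs to B.

  B is saturated: for every e = xy in B there are hubs v, w such that e is the only member of B
  in the triangulation formed by e, the fan from v inside e and the fan from w outside e.

  With the gaps a = c - u - 1, l = n - r, m = r - c - 3, which sum with u to s = n - 4, B has
  3 + ul + ua + lm elements. Taking l = k and u = k or k + 1 realises every value k(s - k) + a
  of ul + ua + lm with a <= s - 2k - 2; for k = 1, 2, ... these intervals are consecutive and
  together reach (s^2 + 12s)/8, which is the required range for t shifted by 3.
*)

theory Submission
  imports Defs
begin

section \<open>Diagonals and crossings\<close>

definition diag :: "nat \<Rightarrow> nat \<Rightarrow> nat \<Rightarrow> bool" where
  "diag n i j \<longleftrightarrow> i + 2 \<le> j \<and> j < n \<and> \<not> (i = 0 \<and> j = n - 1)"

definition interleave :: "nat \<Rightarrow> nat \<Rightarrow> nat \<Rightarrow> nat \<Rightarrow> bool" where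
  "interleave a b c d \<longleftrightarrow> (a < c \<and> c < b \<and> b < d) \<or> (c < a \<and> a < d \<and> d < b)"

lemma side_doubleton_iff:
  assumes "i < j" "j < n"
  shows "side n {i, j} \<longleftrightarrow> j = i + 1 \<or> (i = 0 \<and> j = n - 1)"
proof
  assume "side n {i, j}"
  then obtain k where k: "k < n" "{i, j} = {k, (k + 1) mod n}"
    unfolding side_def by blast
  show "j = i + 1 \<or> (i = 0 \<and> j = n - 1)"
  proof (cases "k + 1 < n")
    case True
    then have "{i, j} = {k, k + 1}"
      using k by simp
    then show ?thesis
      using assms by (auto simp: doubleton_eq_iff)
  next
    case False
    then have "k + 1 = n"
      using k(1) by simp
    then have "k = n - 1" "(k + 1) mod n = 0"
      by auto
    then have "{i, j} = {0, n - 1}"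
      using k(2) by auto
    then show ?thesis
      using assms by (auto simp: doubleton_eq_iff)
  qed
next
  assume "j = i + 1 \<or> (i = 0 \<and> j = n - 1)"
  then obtain k where "k < n" "{i, j} = {k, (k + 1) mod n}"
  proof
    assume "j = i + 1"
    then show thesis
      using that[of i] assms by simp
  next
    assume "i = 0 \<and> j = n - 1"
    then show thesis
      using that[of "n - 1"] assms by (auto simp: doubleton_eq_iff)
  qed
  moreover have "edge n {i, j}"
    unfolding edge_def using assms less_trans by blast
  ultimately show "side n {i, j}"
    unfolding side_def by blast
qed

lemma diagonal_min_max_iff: "diagonal n {i, j} \<longleftrightarrow> diag n (min i j) (max i j)"
proof (cases i j rule: linorder_cases)
  case less
  then have "edge n {i, j} \<longleftrightarrow> j < n"
    unfolding edge_def by (auto simp: doubleton_eq_iff)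
  with less show ?thesis
    unfolding diagonal_def diag_def using side_doubleton_iff[OF less] by auto
next
  case equal
  then show ?thesis
    unfolding diagonal_def edge_def diag_def by (auto simp: doubleton_eq_iff)
next
  case greater
  then have "edge n {j, i} \<longleftrightarrow> i < n"
    unfolding edge_def by (auto simp: doubleton_eq_iff)
  with greater show ?thesis
    unfolding diagonal_def diag_def using side_doubleton_iff[OF greater]
    by (auto simp: insert_commute)
qed

lemma diagonal_doubleton_iff: "i < j \<Longrightarrow> diagonal n {i, j} \<longleftrightarrow> diag n i j"
  by (simp add: diagonal_min_max_iff)

lemma diagonalE:
  assumes "diagonal n e"
  obtains i j where "e = {i, j}" "diag n i j"
proof -
  obtain i j where "e = {i, j}" "i \<noteq> j"
    using assms unfolding diagonal_def edge_def by blast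
  then show thesis
    using that[of "min i j" "max i j"] assms diagonal_min_max_iff
    by (metis insert_commute max_def min_def)
qed

lemma cross_doubleton_iff:
  assumes "a < b" "c < d"
  shows "cross {a, b} {c, d} \<longleftrightarrow> a < c \<and> c < b \<and> b < d"
  using assms unfolding cross_def by (auto simp: doubleton_eq_iff)

lemma cross_either_iff_interleave:
  assumes "a < b" "c < d"
  shows "cross {a, b} {c, d} \<or> cross {c, d} {a, b} \<longleftrightarrow> interleave a b c d"
  using assms unfolding interleave_def by (auto simp: cross_doubleton_iff)

lemma cross_if_separated:
  assumes "i < j" "w \<notin> {i, j}" "z \<notin> {i, j}" "(i < w \<and> w < j) \<noteq> (i < z \<and> z < j)"
  shows "cross {i, j} {w, z} \<or> cross {w, z} {i, j}"
proof (cases "w < z")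
  case True
  then show ?thesis
    using assms cross_either_iff_interleave[of i j w z] unfolding interleave_def by auto
next
  case False
  then have "z < w" "{w, z} = {z, w}"
    using assms by auto
  then show ?thesis
    using assms cross_either_iff_interleave[of i j z w] unfolding interleave_def by auto
qed

lemma not_cross_common_vertex: "v \<in> e \<Longrightarrow> v \<in> f \<Longrightarrow> \<not> cross e f"
  unfolding cross_def by auto

lemma not_cross_separated:
  assumes "\<forall>v\<in>e. x \<le> v \<and> v \<le> y" "\<forall>v\<in>f. v \<le> x \<or> y \<le> v"
  shows "\<not> cross e f" "\<not> cross f e"
  using assms unfolding cross_def by force+

section \<open>Triangulations\<close>

lemma triangulation_diagonal: "triangulation n T \<Longrightarrow> e \<in> T \<Longrightarrow> diagonal n e"
  unfolding triangulation_def by blast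

lemma triangulation_not_interleave:
  assumes "triangulation n T" "{a, b} \<in> T" "{c, d} \<in> T" "a < b" "c < d"
  shows "\<not> interleave a b c d"
  using assms cross_either_iff_interleave[of a b c d]
  unfolding triangulation_def noncrossing_def by blast

lemma triangulation_crossed:
  assumes "triangulation n T" "diag n a b" "{a, b} \<notin> T"
  obtains i j where "{i, j} \<in> T" "diag n i j" "interleave a b i j"
proof -
  have "diagonal n {a, b}"
    using assms(2) diagonal_doubleton_iff[of a b] unfolding diag_def by simp
  then have "\<not> noncrossing (insert {a, b} T)"
    using assms(1,3) unfolding triangulation_def by blast
  then obtain f where "f \<in> T" "cross {a, b} f \<or> cross f {a, b}"
    using assms(1) not_cross_common_vertex[of a "{a, b}"]
    unfolding triangulation_def noncrossing_def by blast
  moreover obtain i j where "f = {i, j}" "diag n i j"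
    using triangulation_diagonal[OF assms(1) \<open>f \<in> T\<close>] by (rule diagonalE)
  ultimately show thesis
    using that assms(2) cross_either_iff_interleave[of a b i j] unfolding diag_def by auto
qed

lemma triangulation_widest_crossing:
  assumes "triangulation n T" "diag n 0 b" "{0, b} \<notin> T"
  obtains p q where "{p, q} \<in> T" "0 < p" "p < b" "b < q" "q < n"
    "\<And>x y. {x, y} \<in> T \<Longrightarrow> 0 < x \<Longrightarrow> x \<le> p \<Longrightarrow> q \<le> y \<Longrightarrow> y < n \<Longrightarrow> x = p \<and> y = q"
proof -
  define crossing where "crossing = (\<lambda>(p, q). {p, q} \<in> T \<and> 0 < p \<and> p < b \<and> b < q \<and> q < n)"
  obtain i j where "{i, j} \<in> T" "diag n i j" "interleave 0 b i j"
    using triangulation_crossed[OF assms] .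
  then have "crossing (i, j)"
    unfolding crossing_def interleave_def diag_def by auto
  moreover have "\<forall>e. crossing e \<longrightarrow> (\<lambda>(p, q). q - p) e < n"
    unfolding crossing_def by auto
  ultimately obtain p q where pq: "crossing (p, q)"
    and widest: "\<And>x y. crossing (x, y) \<Longrightarrow> y - x \<le> q - p"
    using ex_has_greatest_nat[of crossing "(i, j)" "\<lambda>(p, q). q - p" n] by fastforce
  show thesis
  proof (rule that)
    show "{p, q} \<in> T" "0 < p" "p < b" "b < q" "q < n"
      using pq unfolding crossing_def by auto
    then show "x = p \<and> y = q"
      if "{x, y} \<in> T" "0 < x" "x \<le> p" "q \<le> y" "y < n" for x y
      using widest[of x y] that unfolding crossing_def by fastforce
  qed
qed

lemma triangulation_cut_triangle:
  assumes tri: "triangulation n T" and "diag n 0 b" "{0, b} \<notin> T"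
  obtains p q where "{p, q} \<in> T" "0 < p" "p < b" "b < q" "q < n"
    "p = 1 \<or> {0, p} \<in> T" "q = n - 1 \<or> {0, q} \<in> T"
proof -
  obtain p q where pq: "{p, q} \<in> T" "0 < p" "p < b" "b < q" "q < n"
    and enclosing: "\<And>x y. {x, y} \<in> T \<Longrightarrow> 0 < x \<Longrightarrow> x \<le> p \<Longrightarrow> q \<le> y \<Longrightarrow> y < n \<Longrightarrow> x = p \<and> y = q"
    using triangulation_widest_crossing[OF assms] by blast
  have "p = 1 \<or> {0, p} \<in> T"
  proof (rule ccontr)
    assume "\<not> (p = 1 \<or> {0, p} \<in> T)"
    moreover have "diag n 0 p \<longleftrightarrow> p \<noteq> 1"
      using pq unfolding diag_def by auto
    ultimately obtain x y where xy: "{x, y} \<in> T" "diag n x y" "interleave 0 p x y"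
      using triangulation_crossed[OF tri] by blast
    then have "\<not> interleave p q x y"
      using triangulation_not_interleave[OF tri pq(1) xy(1)] pq unfolding diag_def by auto
    then show False
      using xy enclosing[of x y] unfolding interleave_def diag_def by auto
  qed
  moreover have "q = n - 1 \<or> {0, q} \<in> T"
  proof (rule ccontr)
    assume "\<not> (q = n - 1 \<or> {0, q} \<in> T)"
    moreover have "diag n 0 q \<longleftrightarrow> q \<noteq> n - 1"
      using pq unfolding diag_def by auto
    ultimately obtain x y where xy: "{x, y} \<in> T" "diag n x y" "interleave 0 q x y"
      using triangulation_crossed[OF tri] by blast
    then have "\<not> interleave p q x y"
      using triangulation_not_interleave[OF tri pq(1) xy(1)] pq unfolding diag_def by auto
    then show False
      using xy enclosing[of x y] pq unfolding interleave_def diag_def by auto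
  qed
  ultimately show thesis
    by (rule that[OF pq])
qed

section \<open>Double fans\<close>

definition double_fan :: "nat \<Rightarrow> nat \<Rightarrow> nat \<Rightarrow> nat \<Rightarrow> nat \<Rightarrow> nat set set" where
  "double_fan n x y v w = insert {x, y}
     ({{v, z} |z. x \<le> z \<and> z \<le> y \<and> diagonal n {v, z}} \<union>
      {{w, z} |z. (z \<le> x \<or> y \<le> z) \<and> diagonal n {w, z}})"

lemma double_fan_noncrossing:
  assumes "x \<le> v" "v \<le> y" "w \<le> x \<or> y \<le> w"
  shows "noncrossing (double_fan n x y v w)"
proof -
  define inner where "inner = (\<lambda>e::nat set. \<forall>k\<in>e. x \<le> k \<and> k \<le> y)"
  define outer where "outer = (\<lambda>e::nat set. \<forall>k\<in>e. k \<le> x \<or> y \<le> k)"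
  have "(v \<in> e \<and> inner e) \<or> (w \<in> e \<and> outer e) \<or> (inner e \<and> outer e)"
    if "e \<in> double_fan n x y v w" for e
    using that assms unfolding double_fan_def inner_def outer_def by auto
  then show ?thesis
    unfolding noncrossing_def
    using not_cross_common_vertex[of v] not_cross_common_vertex[of w]
      not_cross_separated[of _ x y] unfolding inner_def outer_def by metis
qed

lemma double_fan_memI:
  assumes "diagonal n e"
  shows "v \<in> e \<Longrightarrow> \<forall>k\<in>e. x \<le> k \<and> k \<le> y \<Longrightarrow> e \<in> double_fan n x y v w"
    and "w \<in> e \<Longrightarrow> \<forall>k\<in>e. k \<le> x \<or> y \<le> k \<Longrightarrow> e \<in> double_fan n x y v w"
proof -
  obtain a b where e: "e = {a, b}"
    using assms by (elim diagonalE)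
  define other where "other h = (if h = a then b else a)" for h
  have hub: "e = {h, other h}" "other h \<in> e" if "h \<in> e" for h
    using that unfolding e other_def by auto
  show "e \<in> double_fan n x y v w" if "v \<in> e" "\<forall>k\<in>e. x \<le> k \<and> k \<le> y"
    using hub[OF that(1)] that(2) assms unfolding double_fan_def by blast
  show "e \<in> double_fan n x y v w" if "w \<in> e" "\<forall>k\<in>e. k \<le> x \<or> y \<le> k"
    using hub[OF that(1)] that(2) assms unfolding double_fan_def by blast
qed

lemma fan_inside_crossing:
  assumes "diag n i j" "x \<le> i" "j \<le> y" "(i, j) \<noteq> (x, y)" "y < n"
    and "x \<le> v" "v \<le> y" "v \<notin> {i, j}"
  obtains z where "x \<le> z" "z \<le> y" "diagonal n {v, z}" "z \<notin> {i, j}"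
    "(i < v \<and> v < j) \<noteq> (i < z \<and> z < j)"
proof (cases "i < v \<and> v < j")
  case True
  then have "v \<noteq> n - 1"
    using assms by linarith
  show thesis
  proof (cases "x < i")
    case True
    then show thesis
      using that[of x] \<open>i < v \<and> v < j\<close> \<open>v \<noteq> n - 1\<close> assms
      by (auto simp: diagonal_min_max_iff diag_def)
  next
    case False
    then show thesis
      using that[of y] \<open>i < v \<and> v < j\<close> assms by (auto simp: diagonal_min_max_iff diag_def)
  qed
next
  case False
  have "i + 1 \<noteq> n - 1"
    using assms(1) unfolding diag_def by linarith
  with False show thesis
    using that[of "i + 1"] assms by (auto simp: diagonal_min_max_iff diag_def)
qed

lemma fan_outside_crossing:
  assumes "diag n i j" "diag n x y" "j \<le> x \<or> y \<le> i \<or> (i \<le> x \<and> y \<le> j)" "(i, j) \<noteq> (x, y)"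
    and "w \<le> x \<or> y \<le> w" "w < n" "w \<notin> {i, j}"
  obtains z where "z \<le> x \<or> y \<le> z" "diagonal n {w, z}" "z \<notin> {i, j}"
    "(i < w \<and> w < j) \<noteq> (i < z \<and> z < j)"
proof -
  have ij: "i + 2 \<le> j" "j < n" "\<not> (i = 0 \<and> j = n - 1)" and xy: "x + 2 \<le> y" "y < n"
    using assms(1,2) unfolding diag_def by auto
  show thesis
  proof (cases "i < w \<and> w < j")
    case inside: True
    then have "w \<noteq> n - 1"
      using ij by linarith
    consider "j \<le> x" | "y \<le> i" | "i \<le> x" "y \<le> j" "0 < i" | "i = 0" "y \<le> j"
      using assms(3) by auto
    then show thesis
    proof cases
      case 1
      then show thesis
        using that[of y] inside ij xy by (auto simp: diagonal_min_max_iff diag_def)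
    next
      case 2
      then show thesis
        using that[of x] inside \<open>w \<noteq> n - 1\<close> ij xy by (auto simp: diagonal_min_max_iff diag_def)
    next
      case 3
      then show thesis
        using that[of 0] inside \<open>w \<noteq> n - 1\<close> ij by (auto simp: diagonal_min_max_iff diag_def)
    next
      case 4
      then have "j < n - 1"
        using ij by auto
      with 4 show thesis
        using that[of "n - 1"] inside ij xy by (auto simp: diagonal_min_max_iff diag_def)
    qed
  next
    case outside: False
    show thesis
    proof (cases "i < x \<or> y \<le> i")
      case True
      have "i + 1 \<noteq> n - 1"
        using ij by linarith
      with True show thesis
        using that[of "i + 1"] outside assms(6,7) ij by (auto simp: diagonal_min_max_iff diag_def)
    next
      case False
      then have "i = x" "y < j" "j - 1 \<noteq> n - 1"
        using assms(3,4) ij xy by auto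
      then show thesis
        using that[of "j - 1"] outside assms(6,7) ij by (auto simp: diagonal_min_max_iff diag_def)
    qed
  qed
qed

lemma double_fan_crossed:
  assumes xy: "diag n x y" and v: "x \<le> v" "v \<le> y" and w: "w \<le> x \<or> y \<le> w" "w < n"
    and ij: "diag n i j" "{i, j} \<notin> double_fan n x y v w"
  shows "\<exists>f\<in>double_fan n x y v w. cross {i, j} f \<or> cross f {i, j}"
proof -
  have "i < j" "x < y" "y < n"
    using ij(1) xy unfolding diag_def by auto
  have "(i, j) \<noteq> (x, y)"
    using ij(2) unfolding double_fan_def by auto
  have "diagonal n {i, j}"
    using ij(1) \<open>i < j\<close> diagonal_doubleton_iff by blast
  consider "interleave i j x y" | "x \<le> i" "j \<le> y" | "j \<le> x \<or> y \<le> i \<or> (i \<le> x \<and> y \<le> j)"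
    unfolding interleave_def by linarith
  then show ?thesis
  proof cases
    case 1
    then show ?thesis
      using cross_either_iff_interleave[OF \<open>i < j\<close> \<open>x < y\<close>] unfolding double_fan_def by blast
  next
    case 2
    then have "v \<notin> {i, j}"
      using double_fan_memI(1)[OF \<open>diagonal n {i, j}\<close>, of v x y w] ij(2) \<open>i < j\<close> by auto
    then obtain z where "x \<le> z" "z \<le> y" "diagonal n {v, z}" "z \<notin> {i, j}"
      "(i < v \<and> v < j) \<noteq> (i < z \<and> z < j)"
      using fan_inside_crossing[OF ij(1) 2 \<open>(i, j) \<noteq> (x, y)\<close> \<open>y < n\<close> v] by blast
    then show ?thesis
      using cross_if_separated[OF \<open>i < j\<close> \<open>v \<notin> {i, j}\<close>] unfolding double_fan_def by blast
  next
    case 3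
    then have "w \<notin> {i, j}"
      using double_fan_memI(2)[OF \<open>diagonal n {i, j}\<close>, of w x y v] ij(2) \<open>i < j\<close> by auto
    then obtain z where "z \<le> x \<or> y \<le> z" "diagonal n {w, z}" "z \<notin> {i, j}"
      "(i < w \<and> w < j) \<noteq> (i < z \<and> z < j)"
      using fan_outside_crossing[OF ij(1) xy 3 \<open>(i, j) \<noteq> (x, y)\<close> w] by blast
    then show ?thesis
      using cross_if_separated[OF \<open>i < j\<close> \<open>w \<notin> {i, j}\<close>] unfolding double_fan_def by blast
  qed
qed

lemma triangulation_double_fan:
  assumes xy: "diag n x y" and v: "x \<le> v" "v \<le> y" and w: "w \<le> x \<or> y \<le> w" "w < n"
  shows "triangulation n (double_fan n x y v w)"
  unfolding triangulation_def
proof (intro conjI allI impI)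
  show "\<forall>e\<in>double_fan n x y v w. diagonal n e"
    using xy diagonal_doubleton_iff[of x y] unfolding double_fan_def diag_def by auto
  show "noncrossing (double_fan n x y v w)"
    using double_fan_noncrossing[OF v w(1)] .
  fix e assume "diagonal n e \<and> e \<notin> double_fan n x y v w"
  moreover obtain i j where "e = {i, j}" "diag n i j"
    using calculation by (auto elim: diagonalE)
  ultimately have "\<exists>f\<in>double_fan n x y v w. cross e f \<or> cross f e"
    using double_fan_crossed[OF assms] by blast
  then show "\<not> noncrossing (insert e (double_fan n x y v w))"
    unfolding noncrossing_def by blast
qed

lemma double_fan_doubletonD:
  assumes "{i, j} \<in> double_fan n x y v w" "i < j" "x < y"
    and "x \<le> v" "v \<le> y" "w \<le> x \<or> y \<le> w"
  shows "(i, j) = (x, y) \<or> (x \<le> i \<and> j \<le> y \<and> v \<in> {i, j})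
    \<or> ((i \<le> x \<or> y \<le> i) \<and> (j \<le> x \<or> y \<le> j) \<and> w \<in> {i, j})"
  using assms unfolding double_fan_def by (auto simp: doubleton_eq_iff)

lemma not_blocker_remove_if_double_fan:
  assumes "diag n x y" "x \<le> v" "v \<le> y" "w \<le> x \<or> y \<le> w" "w < n"
    and "B \<inter> double_fan n x y v w \<subseteq> {{x, y}}"
  shows "\<not> blocker n (B - {{x, y}})"
  using triangulation_double_fan[OF assms(1-5)] assms(6) unfolding blocker_def by blast

section \<open>The construction\<close>

locale blocker_construction =
  fixes n u c r :: nat
  assumes u_pos: "1 \<le> u" and u_c_gap: "u + 2 \<le> c" and c_r_gap: "c + 4 \<le> r" and r_lt_n: "r < n"
begin

lemmas params = u_pos u_c_gap c_r_gap r_lt_n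

definition pairs :: "(nat \<times> nat) set" where
  "pairs = {(0, c + 1)} \<union> {1..u} \<times> {r..<n}
     \<union> {(u, c)} \<union> {..<u} \<times> {u<..<c}
     \<union> {(c + 2, r)} \<union> {c + 2<..<r} \<times> {r<..<n} \<union> {0} \<times> {c + 2<..<r}"

definition diags :: "nat set set" where
  "diags = (\<lambda>(i, j). {i, j}) ` pairs"

lemma pairsE:
  assumes "(i, j) \<in> pairs"
  obtains "i = 0" "j = c + 1"
    | "1 \<le> i" "i \<le> u" "r \<le> j" "j < n"
    | "i = u" "j = c"
    | "i < u" "u < j" "j < c"
    | "i = c + 2" "j = r"
    | "c + 2 < i" "i < r" "r < j" "j < n"
    | "i = 0" "c + 2 < j" "j < r"
  using assms unfolding pairs_def by auto

lemma diag_if_pairs: "(i, j) \<in> pairs \<Longrightarrow> diag n i j"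
  using params by (elim pairsE) (auto simp: diag_def)

lemma diagonal_if_diags:
  assumes "e \<in> diags"
  shows "diagonal n e"
proof -
  obtain i j where "e = {i, j}" "diag n i j"
    using assms diag_if_pairs unfolding diags_def by auto
  then show ?thesis
    using diagonal_doubleton_iff[of i j n] unfolding diag_def by auto
qed

lemma diags_meet_if_pairs: "(i, j) \<in> pairs \<Longrightarrow> {i, j} \<in> T \<Longrightarrow> diags \<inter> T \<noteq> {}"
  unfolding diags_def by blast

lemma diags_meet_if_0_c:
  assumes tri: "triangulation n T" and "{0, c} \<in> T"
  shows "diags \<inter> T \<noteq> {}"
proof (cases "{u, c} \<in> T")
  case True
  then show ?thesis
    by (intro diags_meet_if_pairs[of u c]) (auto simp: pairs_def)
next
  case False
  moreover have "diag n u c"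
    using params unfolding diag_def by auto
  ultimately obtain i j where ij: "{i, j} \<in> T" "diag n i j" "interleave u c i j"
    using triangulation_crossed[OF tri] by blast
  then have "\<not> interleave 0 c i j"
    using triangulation_not_interleave[OF tri \<open>{0, c} \<in> T\<close> ij(1)] params
    unfolding diag_def by auto
  then have "i < u" "u < j" "j < c"
    using ij(3) unfolding interleave_def by auto
  then show ?thesis
    using ij(1) by (intro diags_meet_if_pairs[of i j]) (auto simp: pairs_def)
qed

lemma diags_meet_if_0_c2:
  assumes tri: "triangulation n T" and "{0, c + 2} \<in> T"
  shows "diags \<inter> T \<noteq> {}"
proof (cases "{c + 2, r} \<in> T")
  case True
  then show ?thesis
    by (intro diags_meet_if_pairs[of "c + 2" r]) (auto simp: pairs_def)
next
  case False
  moreover have "diag n (c + 2) r"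
    using params unfolding diag_def by auto
  ultimately obtain i j where ij: "{i, j} \<in> T" "diag n i j" "interleave (c + 2) r i j"
    using triangulation_crossed[OF tri] by blast
  then have "\<not> interleave 0 (c + 2) i j"
    using triangulation_not_interleave[OF tri \<open>{0, c + 2} \<in> T\<close> ij(1)]
    unfolding diag_def by auto
  then have "(c + 2 < i \<and> i < r \<and> r < j \<and> j < n) \<or> (i = 0 \<and> c + 2 < j \<and> j < r)"
    using ij(2,3) unfolding interleave_def diag_def by auto
  then show ?thesis
    using ij(1) by (intro diags_meet_if_pairs[of i j]) (auto simp: pairs_def)
qed

lemma diags_meet_if_triangle:
  assumes tri: "triangulation n T" and pq: "{p, q} \<in> T" "0 < p" "p < c + 1" "c + 1 < q" "q < n"
    and adjacent: "p = 1 \<or> {0, p} \<in> T" "q = n - 1 \<or> {0, q} \<in> T"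
  shows "diags \<inter> T \<noteq> {}"
proof -
  consider "p \<le> u" "r \<le> q" | "u < p" "p < c" | "p = c"
    | "p \<le> u" "q = c + 2" | "p \<le> u" "c + 2 < q" "q < r"
    using pq by linarith
  then show ?thesis
  proof cases
    case 1
    then show ?thesis
      using pq by (intro diags_meet_if_pairs[of p q]) (auto simp: pairs_def)
  next
    case 2
    then have "{0, p} \<in> T"
      using adjacent u_pos by auto
    then show ?thesis
      using 2 u_pos by (intro diags_meet_if_pairs[of 0 p]) (auto simp: pairs_def)
  next
    case 3
    then show ?thesis
      using adjacent params diags_meet_if_0_c[OF tri] by auto
  next
    case 4
    then show ?thesis
      using adjacent params diags_meet_if_0_c2[OF tri] by auto
  next
    case 5
    then have "{0, q} \<in> T"
      using adjacent r_lt_n by auto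
    then show ?thesis
      using 5 u_pos by (intro diags_meet_if_pairs[of 0 q]) (auto simp: pairs_def)
  qed
qed

lemma blocker_diags: "blocker n diags"
  unfolding blocker_def
proof (intro conjI allI impI ballI)
  show "diagonal n e" if "e \<in> diags" for e
    using diagonal_if_diags[OF that] .
  fix T assume tri: "triangulation n T"
  show "diags \<inter> T \<noteq> {}"
  proof (cases "{0, c + 1} \<in> T")
    case True
    then show ?thesis
      by (intro diags_meet_if_pairs[of 0 "c + 1"]) (auto simp: pairs_def)
  next
    case False
    moreover have "diag n 0 (c + 1)"
      using params unfolding diag_def by auto
    ultimately obtain p q where "{p, q} \<in> T" "0 < p" "p < c + 1" "c + 1 < q" "q < n"
      "p = 1 \<or> {0, p} \<in> T" "q = n - 1 \<or> {0, q} \<in> T"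
      using triangulation_cut_triangle[OF tri] by blast
    then show ?thesis
      by (rule diags_meet_if_triangle[OF tri])
  qed
qed

lemma not_blocker_diags_remove_if_double_fan:
  assumes xy: "(x, y) \<in> pairs" and "x \<le> v" "v \<le> y" "w \<le> x \<or> y \<le> w" "w < n"
    and inside: "\<And>i j. (i, j) \<in> pairs \<Longrightarrow> x \<le> i \<Longrightarrow> j \<le> y \<Longrightarrow> v = i \<or> v = j \<Longrightarrow> i = x \<and> j = y"
    and outside: "\<And>i j. (i, j) \<in> pairs \<Longrightarrow> i \<le> x \<or> y \<le> i \<Longrightarrow> j \<le> x \<or> y \<le> j \<Longrightarrow> w = i \<or> w = j
      \<Longrightarrow> i = x \<and> j = y"
  shows "\<not> blocker n (diags - {{x, y}})"
proof (rule not_blocker_remove_if_double_fan[OF diag_if_pairs[OF xy] assms(2-5)], rule subsetI)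
  fix e assume e: "e \<in> diags \<inter> double_fan n x y v w"
  then obtain i j where ij: "(i, j) \<in> pairs" "e = {i, j}"
    unfolding diags_def by auto
  have "i < j" "x < y"
    using diag_if_pairs[OF ij(1)] diag_if_pairs[OF xy] unfolding diag_def by auto
  then have "(i, j) = (x, y)"
    using double_fan_doubletonD[of i j n x y v w] e ij assms(2-4) inside outside by blast
  then show "e \<in> {{x, y}}"
    using ij(2) by simp
qed

lemma not_blocker_diags_remove:
  assumes "e \<in> diags"
  shows "\<not> blocker n (diags - {e})"
proof -
  obtain x y where xy: "(x, y) \<in> pairs" and e: "e = {x, y}"
    using assms unfolding diags_def by auto
  note fan = not_blocker_diags_remove_if_double_fan[OF xy]
  from xy have "\<not> blocker n (diags - {{x, y}})"
  proof (cases rule: pairsE)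
    case 1
    show ?thesis
      by (rule fan[of "c + 1" "c + 1"]) (use 1 params in \<open>(elim pairsE disjE)?; linarith\<close>)+
  next
    case 2
    show ?thesis
      by (rule fan[of "c + 1" 0]) (use 2 params in \<open>(elim pairsE disjE)?; linarith\<close>)+
  next
    case 3
    show ?thesis
      by (rule fan[of c c]) (use 3 params in \<open>(elim pairsE disjE)?; linarith\<close>)+
  next
    case 4
    show ?thesis
      by (rule fan[of u c]) (use 4 params in \<open>(elim pairsE disjE)?; linarith\<close>)+
  next
    case 5
    show ?thesis
      by (rule fan[of "c + 2" "c + 2"]) (use 5 params in \<open>(elim pairsE disjE)?; linarith\<close>)+
  next
    case 6
    show ?thesis
      by (rule fan[of r "c + 2"]) (use 6 params in \<open>(elim pairsE disjE)?; linarith\<close>)+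
  next
    case 7
    show ?thesis
      by (rule fan[of "c + 2" r]) (use 7 params in \<open>(elim pairsE disjE)?; linarith\<close>)+
  qed
  then show ?thesis
    using e by simp
qed

lemma card_diags: "card diags = 3 + u * (n - r) + u * (c - u - 1) + (n - r) * (r - c - 3)"
proof -
  define a m l where "a = c - u - 1" and "m = r - c - 3" and "l = n - r - 1"
  then have c: "c = u + a + 1" and r: "r = c + m + 3" and n: "n = r + l + 1"
    using params by auto
  have "inj_on (\<lambda>(i, j). {i, j}) pairs"
    unfolding inj_on_def by (auto simp: doubleton_eq_iff dest!: diag_if_pairs simp: diag_def)
  then have "card diags = card pairs"
    unfolding diags_def by (rule card_image)
  also have "\<dots> = 3 + u * (l + 1) + u * a + m * l + m"
    unfolding pairs_def using u_pos by (simp add: c r n card_Un_disjoint disjoint_iff)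
  finally show ?thesis
    by (simp add: c r n algebra_simps)
qed

lemma nt_blocker_diags: "nt_blocker n (card diags) diags"
proof -
  have "finite diags"
    unfolding diags_def pairs_def by simp
  then show ?thesis
    unfolding nt_blocker_def saturated_blocker_def
    using blocker_diags not_blocker_diags_remove by blast
qed

end

section \<open>Attainable sizes\<close>

definition attainable :: "nat \<Rightarrow> nat \<Rightarrow> bool" where
  "attainable s w \<longleftrightarrow> (\<exists>u a l m. 1 \<le> u \<and> 1 \<le> a \<and> 1 \<le> l \<and> 1 \<le> m \<and>
     u + a + l + m = s \<and> u * l + u * a + l * m = w)"

lemma attainable_shifted_product:
  assumes "1 \<le> k"
  shows "attainable (2 * k + a + e + 2) (k * (k + a + e + 2) + a)"
proof (cases "a = 0")
  case True
  then show ?thesis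
    unfolding attainable_def using assms
    by (intro exI[of _ k] exI[of _ 1] exI[of _ k] exI[of _ "e + 1"]) (simp add: algebra_simps)
next
  case False
  then show ?thesis
    unfolding attainable_def using assms
    by (intro exI[of _ "k + 1"] exI[of _ a] exI[of _ k] exI[of _ "e + 1"]) (simp add: algebra_simps)
qed

lemma attainable_upto:
  "2 * k + 2 \<le> s \<Longrightarrow> s - 1 \<le> w \<Longrightarrow> w + 2 * k + 2 \<le> k * (s - k) + s \<Longrightarrow> attainable s w"
proof (induction k)
  case 0
  then show ?case by simp
next
  case (Suc k)
  show ?case
  proof (cases "w + 2 * k + 2 \<le> k * (s - k) + s")
    case True
    then show ?thesis
      using Suc by simp
  next
    case False
    obtain e where "s = 2 * Suc k + 2 + e"
      using Suc.prems(1) le_iff_add by blast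
    then have s: "s = 2 * k + e + 4"
      by simp
    define a where "a = w - (k + 1) * (k + e + 3)"
    have "(k + 1) * (k + e + 3) \<le> w" "a \<le> e"
      using False Suc.prems(3) unfolding s a_def by (simp_all add: algebra_simps)
    then have "s = 2 * (k + 1) + a + (e - a) + 2" "w = (k + 1) * ((k + 1) + a + (e - a) + 2) + a"
      unfolding s a_def by (simp_all add: algebra_simps)
    then show ?thesis
      using attainable_shifted_product[of "k + 1" a "e - a"] by simp
  qed
qed

lemma attainable_interval:
  assumes "17 \<le> s" "s - 1 \<le> w" "8 * w \<le> s * s + 12 * s"
  shows "attainable s w"
proof -
  define k where "k = (s - 2) div 2"
  have "7 \<le> k"
    using assms(1) unfolding k_def by simp
  then have "7 * k \<le> k * k"
    by simp
  have "w + 2 * k + 2 \<le> k * (s - k) + s"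
  proof (cases "s = 2 * k + 2")
    case True
    then have "k * (s - k) = k * k + 2 * k" "s * s = 4 * (k * k) + 8 * k + 4"
      by (simp_all add: algebra_simps)
    then show ?thesis
      using True assms(3) \<open>7 \<le> k\<close> \<open>7 * k \<le> k * k\<close> by linarith
  next
    case False
    then have "s = 2 * k + 3"
      using assms(1) unfolding k_def by linarith
    then have "k * (s - k) = k * k + 3 * k" "s * s = 4 * (k * k) + 12 * k + 9"
      by (simp_all add: algebra_simps)
    then show ?thesis
      using \<open>s = 2 * k + 3\<close> assms(3) \<open>7 \<le> k\<close> \<open>7 * k \<le> k * k\<close> by linarith
  qed
  moreover have "2 * k + 2 \<le> s"
    using assms(1) unfolding k_def by linarith
  ultimately show ?thesis
    using attainable_upto assms(2) by blast
qed

lemma attainable_if_real_bounds: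
  assumes "21 \<le> n"
    and "real n ^ 2 / 8 + real n / 4 - 11 / 8 \<le> real t" "real t \<le> real n ^ 2 / 8 + real n / 2 - 2"
  shows "n - 2 \<le> t" "attainable (n - 4) (t - 3)"
proof -
  have "(real n - 1) * (real n - 5) \<ge> 0"
    using assms(1) by simp
  then show "n - 2 \<le> t"
    using assms(1,2) by (simp add: algebra_simps power2_eq_square)
  have "8 * (real t - 3) \<le> (real n - 4) * (real n - 4) + 12 * (real n - 4)"
    using assms(3) by (simp add: algebra_simps power2_eq_square)
  moreover have "real (n - 4) = real n - 4" "real (t - 3) = real t - 3"
    using assms(1) \<open>n - 2 \<le> t\<close> by auto
  ultimately have "real (8 * (t - 3)) \<le> real ((n - 4) * (n - 4) + 12 * (n - 4))"
    by (simp only: of_nat_add of_nat_mult of_nat_numeral)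
  then have "8 * (t - 3) \<le> (n - 4) * (n - 4) + 12 * (n - 4)"
    by (simp only: of_nat_le_iff)
  then show "attainable (n - 4) (t - 3)"
    using assms(1) \<open>n - 2 \<le> t\<close> by (intro attainable_interval) auto
qed

theorem lemma3p5:
  fixes n t :: nat
  assumes "n \<ge> 21"
    and "real n ^ 2 / 8 + real n / 4 - 11 / 8 \<le> real t"
    and "real t \<le> real n ^ 2 / 8 + real n / 2 - 2"
  shows "\<exists>B. nt_blocker n t B"
proof -
  obtain u a l m where gaps: "1 \<le> u" "1 \<le> a" "1 \<le> l" "1 \<le> m"
    "u + a + l + m = n - 4" "u * l + u * a + l * m = t - 3"
    using attainable_if_real_bounds[OF assms] unfolding attainable_def by blast
  interpret blocker_construction n u "u + a + 1" "u + a + m + 4"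
    using gaps by unfold_locales auto
  have "n - (u + a + m + 4) = l"
    using gaps(5) assms(1) by linarith
  then have "card diags = t"
    using card_diags gaps(6) attainable_if_real_bounds(1)[OF assms] assms(1) by simp
  then show ?thesis
    using nt_blocker_diags by metis
qed

end
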